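(* Let $(\Lambda,d)$ be a finitely aligned $k$-graph and let $(\overline{\Lambda},\overline d)$ be its extension as described in the context. Suppose $v\in\Lambda^0$ and $E\subseteq v\Lambda$ is a finite exhaustive subset of $\Lambda$. Then $E$ is also a finite exhaustive subset of $\overline{\Lambda}$, i.e. for every $\mu\in v\overline{\Lambda}$ there is $\lambda\in E$ with $\overline{\Lambda}^{\min}(\lambda,\mu)\neq\emptyset$.
   Context: A $k$-graph $(\Lambda,d)$ is a countable category with a degree functor $d:\Lambda\to\mathbb{N}^k$ satisfying unique factorization; $\Lambda^0$ vertices, $r,s$ range/source, $v\Gamma=\{\lambda\in\Gamma:r(\lambda)=v\}$, $v\Lambda^n=\{\lambda:r(\lambda)=v,d(\lambda)=n\}$; $e_i$ standard basis, $\le$ coordinatewise, $\vee,\wedge$ coordinatewise max/min. For a $k$-graph $\Gamma$, $\Gamma^{\min}(\lambda,\mu)=\{(\alpha,\beta):\lambda\alpha=\mu\beta,\ d(\lambda\alpha)=d(\lambda)\vee d(\mu)\}$; $\Gamma$ is finitely aligned if these are finite; $E\subseteq v\Gamma$ is exhaustive (in $\Gamma$) if for every $\mu\in v\Gamma$ there is $\lambda\in E$ with $\Gamma^{\min}(\lambda,\mu)\neq\emptyset$. For $m\in(\mathbb{N}\cup\{\infty\})^k$, $\Omega_{k,m}$ has objects $\{p\in\mathbb{N}^k:p\le m\}$, morphisms $(p,q)$, $p\le q\le m$, $r(p,q)=p$, $s(p,q)=q$, $d(p,q)=q-p$. A graph morphism $x:\Omega_{k,m}\to\Lambda$ is a degree-preserving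 functor; $d(x)=m$, $x(a,b)=x((a,b))$, $x(a)=x(a,a)$. It is a boundary path if there is $n_x\in\mathbb{N}^k$, $n_x\le d(x)$, with $x(p)\Lambda^{e_i}=\emptyset$ whenever $p\in\mathbb{N}^k$, $n_x\le p\le d(x)$, $p_i=d(x)_i$; $\Lambda^{\le\infty}$ is the set of boundary paths. $\sigma^px(a,b)=x(a+p,b+p)$; $\lambda x$ is the concatenation of $\lambda$ and $x$. $V_\Lambda=\{(x;m):x\in\Lambda^{\le\infty},m\in\mathbb{N}^k,m\not\le d(x)\}$, $(x;m)\approx(y;p)$ iff $x(m\wedge d(x))=y(p\wedge d(y))$ and $m-m\wedge d(x)=p-p\wedge d(y)$; classes $[x;m]$ form $\widetilde{V_\Lambda}$. $P_\Lambda=\{(x;(m,n)):x\in\Lambda^{\le\infty},m\le n\in\mathbb{N}^k,n\not\le d(x)\}$, $(x;(m,n))\sim(y;(p,q))$ iff $x(m\wedge d(x),n\wedge d(x))=y(p\wedge d(y),q\wedge d(y))$, $m-m\wedge d(x)=p-p\wedge d(y)$, $n-m=q-p$; classes $[x;(m,n)]$ form $\widetilde{P_\Lambda}$. The extension $\overline{\Lambda}$ is the $k$-graph with objects $\Lambda^0\sqcup\widetilde{V_\Lambda}$ and morphisms $\Lambda\sqcup\widetilde{P_\Lambda}$: on $\Lambda$ everything is as in $\Lambda$; $\overline r([x;(m,n)])=x(m)$ if $m\le d(x)$, else $[x;m]$; $\overline s([x;(m,n)])=[x;n]$; identity at $[x;m]$ is $[x;(m,m)]$; $\lambda[x;(m,n)]=[\lambda\sigma^mx;(0,d(\lambda)+n-m)]$;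 $[x;(m,n)][y;(p,q)]=[z;(m,n+q-p)]$ with $z=x(0,n\wedge d(x))\sigma^{p\wedge d(y)}y$; degree $\overline d|_\Lambda=d$, $\overline d([x;(m,n)])=n-m$. *)

theory Defs
  imports Main "HOL-Library.Extended_Nat" "HOL-Library.Function_Algebras"
begin

text \<open>Degrees in N^k are functions nat => nat vanishing outside {..<k}; order, sup, inf,
  plus and (truncated) minus are pointwise.  A k-graph is encoded by its set of morphisms;
  objects (vertices) are identified with the identity morphisms, i.e. the degree-0 morphisms.\<close>

record 'a cat_data =
  Mor :: "'a set"
  rg  :: "'a \<Rightarrow> 'a"
  sr  :: "'a \<Rightarrow> 'a"
  dg  :: "'a \<Rightarrow> nat \<Rightarrow> nat"
  cmp :: "'a \<Rightarrow> 'a \<Rightarrow> 'a"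

definition degs :: "nat \<Rightarrow> (nat \<Rightarrow> nat) set" where
  "degs k = {n. \<forall>i. k \<le> i \<longrightarrow> n i = 0}"

definition ebasis :: "nat \<Rightarrow> nat \<Rightarrow> nat" where
  "ebasis i = (\<lambda>j. if j = i then 1 else 0)"

definition verts :: "'a cat_data \<Rightarrow> 'a set" where
  "verts G = {v \<in> Mor G. dg G v = 0}"

definition is_kgraph :: "nat \<Rightarrow> 'a cat_data \<Rightarrow> bool" where
  "is_kgraph k G \<longleftrightarrow>
     countable (Mor G) \<and>
     (\<forall>l \<in> Mor G. dg G l \<in> degs k \<and> rg G l \<in> verts G \<and> sr G l \<in> verts G) \<and>
     (\<forall>v \<in> verts G. rg G v = v \<and> sr G v = v) \<and>
     (\<forall>l \<in> Mor G. cmp G (rg G l) l = l \<and> cmp G l (sr G l) = l) \<and>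
     (\<forall>l \<in> Mor G. \<forall>m \<in> Mor G. sr G l = rg G m \<longrightarrow>
        cmp G l m \<in> Mor G \<and> rg G (cmp G l m) = rg G l \<and> sr G (cmp G l m) = sr G m \<and>
        dg G (cmp G l m) = dg G l + dg G m) \<and>
     (\<forall>l \<in> Mor G. \<forall>m \<in> Mor G. \<forall>n \<in> Mor G. sr G l = rg G m \<longrightarrow> sr G m = rg G n \<longrightarrow>
        cmp G (cmp G l m) n = cmp G l (cmp G m n)) \<and>
     (\<forall>l \<in> Mor G. \<forall>m \<in> degs k. \<forall>n \<in> degs k. dg G l = m + n \<longrightarrow>
        (\<exists>!(a, b). a \<in> Mor G \<and> b \<in> Mor G \<and> sr G a = rg G b \<and>
                  dg G a = m \<and> dg G b = n \<and> cmp G a b = l))"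

definition minext :: "'a cat_data \<Rightarrow> 'a \<Rightarrow> 'a \<Rightarrow> ('a \<times> 'a) set" where
  "minext G l m = {(a, b). a \<in> Mor G \<and> b \<in> Mor G \<and> sr G l = rg G a \<and> sr G m = rg G b \<and>
       cmp G l a = cmp G m b \<and> dg G (cmp G l a) = sup (dg G l) (dg G m)}"

definition finitely_aligned :: "'a cat_data \<Rightarrow> bool" where
  "finitely_aligned G \<longleftrightarrow> (\<forall>l \<in> Mor G. \<forall>m \<in> Mor G. finite (minext G l m))"

definition exhaustive :: "'a cat_data \<Rightarrow> 'a \<Rightarrow> 'a set \<Rightarrow> bool" where
  "exhaustive G v E \<longleftrightarrow> (\<forall>m \<in> Mor G. rg G m = v \<longrightarrow> (\<exists>l \<in> E. minext G l m \<noteq> {}))"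

definition seg :: "'a cat_data \<Rightarrow> 'a \<Rightarrow> (nat \<Rightarrow> nat) \<Rightarrow> (nat \<Rightarrow> nat) \<Rightarrow> 'a" where
  "seg G l p q = (THE n. \<exists>a b. a \<in> Mor G \<and> n \<in> Mor G \<and> b \<in> Mor G \<and>
      sr G a = rg G n \<and> sr G n = rg G b \<and> dg G a = p \<and> dg G n = q - p \<and>
      dg G b = dg G l - q \<and> cmp G (cmp G a n) b = l)"

text \<open>Graph morphisms x : Omega_{k,m} -> Lambda, represented by their degree m :: nat => enat
  and their values on pairs (p,q) with p <= q <= m (values elsewhere are irrelevant).\<close>
type_synonym 'a kpath = "(nat \<Rightarrow> enat) \<times> ((nat \<Rightarrow> nat) \<times> (nat \<Rightarrow> nat) \<Rightarrow> 'a)"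

definition ed :: "(nat \<Rightarrow> nat) \<Rightarrow> nat \<Rightarrow> enat" where
  "ed m = (\<lambda>i. enat (m i))"

definition dmin :: "(nat \<Rightarrow> nat) \<Rightarrow> (nat \<Rightarrow> enat) \<Rightarrow> nat \<Rightarrow> nat" where
  "dmin m dx = (\<lambda>i. if enat (m i) \<le> dx i then m i else the_enat (dx i))"

definition graph_morphism :: "nat \<Rightarrow> 'a cat_data \<Rightarrow> 'a kpath \<Rightarrow> bool" where
  "graph_morphism k G x \<longleftrightarrow>
     (\<forall>i. k \<le> i \<longrightarrow> fst x i = 0) \<and>
     (\<forall>p \<in> degs k. \<forall>q \<in> degs k. p \<le> q \<longrightarrow> ed q \<le> fst x \<longrightarrow>
        snd x (p, q) \<in> Mor G \<and> dg G (snd x (p, q)) = q - p \<and>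
        rg G (snd x (p, q)) = snd x (p, p) \<and> sr G (snd x (p, q)) = snd x (q, q)) \<and>
     (\<forall>p \<in> degs k. \<forall>q \<in> degs k. \<forall>t \<in> degs k. p \<le> q \<longrightarrow> q \<le> t \<longrightarrow> ed t \<le> fst x \<longrightarrow>
        cmp G (snd x (p, q)) (snd x (q, t)) = snd x (p, t))"

definition boundary_path :: "nat \<Rightarrow> 'a cat_data \<Rightarrow> 'a kpath \<Rightarrow> bool" where
  "boundary_path k G x \<longleftrightarrow> graph_morphism k G x \<and>
     (\<exists>nx \<in> degs k. ed nx \<le> fst x \<and>
        (\<forall>p \<in> degs k. nx \<le> p \<longrightarrow> ed p \<le> fst x \<longrightarrow>
          (\<forall>i < k. enat (p i) = fst x i \<longrightarrow>
             \<not> (\<exists>l \<in> Mor G. rg G l = snd x (p, p) \<and> dg G l = ebasis i))))"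

definition shift :: "(nat \<Rightarrow> nat) \<Rightarrow> 'a kpath \<Rightarrow> 'a kpath" where
  "shift p x = ((\<lambda>i. fst x i - enat (p i)), (\<lambda>(a, b). snd x (a + p, b + p)))"

definition concat :: "'a cat_data \<Rightarrow> 'a \<Rightarrow> 'a kpath \<Rightarrow> 'a kpath" where
  "concat G l x = ((\<lambda>i. enat (dg G l i) + fst x i),
     (\<lambda>(a, b). seg G (cmp G l (snd x (0, sup b (dg G l) - dg G l))) a b))"

type_synonym 'a prep = "'a kpath \<times> ((nat \<Rightarrow> nat) \<times> (nat \<Rightarrow> nat))"

definition Preps :: "nat \<Rightarrow> 'a cat_data \<Rightarrow> 'a prep set" where
  "Preps k G = {(x, (m, n)). boundary_path k G x \<and> m \<in> degs k \<and> n \<in> degs k \<and> m \<le> n \<and>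
                   \<not> ed n \<le> fst x}"

definition peq :: "'a prep \<Rightarrow> 'a prep \<Rightarrow> bool" where
  "peq a b = (case a of (x, (m, n)) \<Rightarrow> case b of (y, (p, q)) \<Rightarrow>
      snd x (dmin m (fst x), dmin n (fst x)) = snd y (dmin p (fst y), dmin q (fst y)) \<and>
      m - dmin m (fst x) = p - dmin p (fst y) \<and> n - m = q - p)"

definition pcls :: "nat \<Rightarrow> 'a cat_data \<Rightarrow> 'a prep \<Rightarrow> 'a prep set" where
  "pcls k G a = {b \<in> Preps k G. peq b a}"

definition Ptilde :: "nat \<Rightarrow> 'a cat_data \<Rightarrow> 'a prep set set" where
  "Ptilde k G = pcls k G ` Preps k G"

definition rep :: "'a prep set \<Rightarrow> 'a prep" where
  "rep C = (SOME a. a \<in> C)"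

text \<open>Morphisms: Inl lambda for lambda in Lambda, Inr [x;(m,n)]
  for classes in P~; the vertex [x;m] is the identity [x;(m,m)].  Composition of the form
  [x;(m,n)] lambda is never defined (sources of P~ are never in Lambda^0).\<close>
definition ext :: "nat \<Rightarrow> 'a cat_data \<Rightarrow> ('a + 'a prep set) cat_data" where
  "ext k G = \<lparr>
     Mor = Inl ` Mor G \<union> Inr ` Ptilde k G,
     rg = (\<lambda>u. case u of Inl l \<Rightarrow> Inl (rg G l)
              | Inr C \<Rightarrow> (case rep C of (x, (m, n)) \<Rightarrow>
                   if ed m \<le> fst x then Inl (snd x (m, m)) else Inr (pcls k G (x, (m, m))))),
     sr = (\<lambda>u. case u of Inl l \<Rightarrow> Inl (sr G l)
              | Inr C \<Rightarrow> (case rep C of (x, (m, n)) \<Rightarrow> Inr (pcls k G (x, (n, n))))),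
     dg = (\<lambda>u. case u of Inl l \<Rightarrow> dg G l
              | Inr C \<Rightarrow> (case rep C of (x, (m, n)) \<Rightarrow> n - m)),
     cmp = (\<lambda>u w. case u of
              Inl l \<Rightarrow> (case w of Inl l' \<Rightarrow> Inl (cmp G l l')
                 | Inr D \<Rightarrow> (case rep D of (x, (m, n)) \<Rightarrow>
                     Inr (pcls k G (concat G l (shift m x), (0, dg G l + n - m)))))
            | Inr C \<Rightarrow> (case w of Inl l' \<Rightarrow> undefined
                 | Inr D \<Rightarrow> (case rep C of (x, (m, n)) \<Rightarrow> case rep D of (y, (p, q)) \<Rightarrow>
                     Inr (pcls k G (concat G (snd x (0, dmin n (fst x))) (shift (dmin p (fst y)) y),
                                    (m, n + q - p))))))
   \<rparr>"

end

theory Submission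
  imports Defs
begin

(* Let mu = [x;(m,n)] have range v in Lambda, so m <= d(x) and x(m) = v.  Apply exhaustiveness
  of E to the segment x(m,t), where t exceeds m + d(lambda) for every lambda in E and the
  boundary index n_x, capped at d(x).  This gives lambda in E with lambda alpha = x(m,t) beta
  minimal; every direction in which beta has positive degree is one where t has reached d(x),
  and x(t) receives no edges there, so beta is trivial and lambda = x(m, m + d(lambda)).
  With N = d(lambda) \/ (n - m), both [x;(m,n)] [x;(n,m+N)] and lambda [x;(m+d(lambda),m+N)]
  equal [x;(m,m+N)], whose degree is d(lambda) \/ d(mu). *)

lemma degs_add: "a \<in> degs k \<Longrightarrow> b \<in> degs k \<Longrightarrow> a + b \<in> degs k"
  by (simp add: degs_def)

lemma degs_diff: "a \<in> degs k \<Longrightarrow> a - b \<in> degs k"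
  by (simp add: degs_def)

lemma degs_sup: "a \<in> degs k \<Longrightarrow> b \<in> degs k \<Longrightarrow> sup a b \<in> degs k"
  by (simp add: degs_def)

lemma zero_in_degs: "0 \<in> degs k"
  by (simp add: degs_def)

lemma degs_dmin: "a \<in> degs k \<Longrightarrow> dmin a f \<in> degs k"
  by (simp add: degs_def dmin_def zero_enat_def[symmetric])

lemma ebasis_in_degs: "i < k \<Longrightarrow> ebasis i \<in> degs k"
  by (simp add: degs_def ebasis_def)

lemma finite_degs_bounded:
  assumes "finite A" "A \<subseteq> degs k"
  shows "\<exists>M \<in> degs k. \<forall>a \<in> A. a \<le> M"
  using assms
proof (induction A rule: finite_induct)
  case empty
  show ?case using zero_in_degs by blast
next
  case (insert a A)
  then obtain M where "M \<in> degs k" "\<forall>b \<in> A. b \<le> M" by auto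
  moreover have "sup a M \<in> degs k" using insert.prems \<open>M \<in> degs k\<close> degs_sup by blast
  ultimately show ?case by (metis insert_iff sup_ge1 sup_ge2 order_trans)
qed

lemma ed_mono: "a \<le> b \<Longrightarrow> ed b \<le> f \<Longrightarrow> ed a \<le> f"
  unfolding le_fun_def ed_def by (meson enat_ord_simps(1) order_trans)

lemma dmin_le: "dmin a f \<le> a"
  unfolding dmin_def le_fun_def
proof
  fix i show "(if enat (a i) \<le> f i then a i else the_enat (f i)) \<le> a i"
    by (cases "f i") auto
qed

lemma ed_dmin: "ed (dmin a f) \<le> f"
  unfolding dmin_def le_fun_def ed_def
proof
  fix i show "enat (if enat (a i) \<le> f i then a i else the_enat (f i)) \<le> f i"
    by (cases "f i") auto
qed

lemma dmin_eq: "ed a \<le> f \<Longrightarrow> dmin a f = a"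
  by (auto simp: dmin_def le_fun_def ed_def)

lemma dmin_mono: "a \<le> b \<Longrightarrow> dmin a f \<le> dmin b f"
  unfolding dmin_def le_fun_def
proof
  fix i assume "\<forall>x. a x \<le> b x"
  then have "a i \<le> b i" by simp
  then show "(if enat (a i) \<le> f i then a i else the_enat (f i))
      \<le> (if enat (b i) \<le> f i then b i else the_enat (f i))"
    by (cases "f i") auto
qed

lemma le_dmin: "a \<le> b \<Longrightarrow> ed a \<le> f \<Longrightarrow> a \<le> dmin b f"
  by (metis dmin_eq dmin_mono)

lemma diff_dmin_eq_0_iff: "a - dmin a f = 0 \<longleftrightarrow> ed a \<le> f"
proof
  assume h: "a - dmin a f = 0"
  show "ed a \<le> f" unfolding le_fun_def ed_def
  proof
    fix i
    from h have "a i - dmin a f i = 0" by (metis minus_apply zero_fun_def)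
    then show "enat (a i) \<le> f i"
      by (cases "f i") (auto simp: dmin_def split: if_splits)
  qed
qed (simp add: dmin_eq)

lemma dmin_less_imp_eq:
  assumes "dmin s f i < s i"
  shows "enat (dmin s f i) = f i"
  using assms by (cases "f i") (auto simp: dmin_def split: if_splits)

lemma dmin_add_shifted:
  assumes "ed P \<le> f" "P \<le> q"
  shows "dmin (d + (q - P)) (\<lambda>i. enat (d i) + (f i - enat (P i))) = d + (dmin q f - P)"
proof
  fix i
  from assms have "enat (P i) \<le> f i" "P i \<le> q i" by (auto simp: le_fun_def ed_def)
  then show "dmin (d + (q - P)) (\<lambda>i. enat (d i) + (f i - enat (P i))) i = (d + (dmin q f - P)) i"
    by (cases "f i") (auto simp: dmin_def)
qed

locale kgraph =
  fixes k :: nat and G :: "'a cat_data"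
  assumes is_kgraph: "is_kgraph k G"
begin

lemma dg_in_degs: "l \<in> Mor G \<Longrightarrow> dg G l \<in> degs k"
  and rg_in_verts: "l \<in> Mor G \<Longrightarrow> rg G l \<in> verts G"
  and sr_in_verts: "l \<in> Mor G \<Longrightarrow> sr G l \<in> verts G"
  and rg_vert: "v \<in> verts G \<Longrightarrow> rg G v = v"
  and sr_vert: "v \<in> verts G \<Longrightarrow> sr G v = v"
  and cmp_rg: "l \<in> Mor G \<Longrightarrow> cmp G (rg G l) l = l"
  and cmp_sr: "l \<in> Mor G \<Longrightarrow> cmp G l (sr G l) = l"
  using is_kgraph by (simp_all add: is_kgraph_def)

lemma
  assumes "l \<in> Mor G" "m \<in> Mor G" "sr G l = rg G m"
  shows cmp_in_Mor: "cmp G l m \<in> Mor G"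
    and rg_cmp: "rg G (cmp G l m) = rg G l"
    and sr_cmp: "sr G (cmp G l m) = sr G m"
    and dg_cmp: "dg G (cmp G l m) = dg G l + dg G m"
  using is_kgraph assms unfolding is_kgraph_def by blast+

lemma cmp_assoc:
  "l \<in> Mor G \<Longrightarrow> m \<in> Mor G \<Longrightarrow> n \<in> Mor G \<Longrightarrow> sr G l = rg G m \<Longrightarrow> sr G m = rg G n \<Longrightarrow>
    cmp G (cmp G l m) n = cmp G l (cmp G m n)"
  using is_kgraph unfolding is_kgraph_def by blast

lemma factorization_ex1:
  "l \<in> Mor G \<Longrightarrow> m \<in> degs k \<Longrightarrow> n \<in> degs k \<Longrightarrow> dg G l = m + n \<Longrightarrow>
    \<exists>!(a, b). a \<in> Mor G \<and> b \<in> Mor G \<and> sr G a = rg G b \<and> dg G a = m \<and> dg G b = n \<and>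
      cmp G a b = l"
  using is_kgraph unfolding is_kgraph_def by blast

lemma factorization:
  assumes "l \<in> Mor G" "m \<in> degs k" "n \<in> degs k" "dg G l = m + n"
  obtains a b where "a \<in> Mor G" "b \<in> Mor G" "sr G a = rg G b" "dg G a = m" "dg G b = n"
    "cmp G a b = l"
  using factorization_ex1[OF assms] by auto

lemma factorization_unique:
  assumes ab: "a \<in> Mor G" "b \<in> Mor G" "sr G a = rg G b"
    and ab': "a' \<in> Mor G" "b' \<in> Mor G" "sr G a' = rg G b'"
    and eq: "dg G a' = dg G a" "cmp G a' b' = cmp G a b"
  shows "a' = a \<and> b' = b"
proof -
  have "dg G b' = dg G b"
    using ab ab' eq dg_cmp by (metis add_left_imp_eq)
  moreover obtain c where c: "\<And>u. (case u of (a'', b'') \<Rightarrow> a'' \<in> Mor G \<and> b'' \<in> Mor G \<and>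
      sr G a'' = rg G b'' \<and> dg G a'' = dg G a \<and> dg G b'' = dg G b \<and> cmp G a'' b'' = cmp G a b)
      \<Longrightarrow> u = c"
    using factorization_ex1[OF cmp_in_Mor[OF ab] dg_in_degs[OF ab(1)] dg_in_degs[OF ab(2)]
        dg_cmp[OF ab]] by (meson ex1E)
  ultimately have "(a', b') = c" "(a, b) = c"
    using ab ab' eq by (auto intro!: c)
  then show ?thesis by (metis prod.inject)
qed

lemma seg_middle:
  assumes "a \<in> Mor G" "n \<in> Mor G" "b \<in> Mor G" "sr G a = rg G n" "sr G n = rg G b"
  shows "seg G (cmp G (cmp G a n) b) (dg G a) (dg G a + dg G n) = n"
  unfolding seg_def
proof (rule the_equality)
  let ?an = "cmp G a n"
  have an: "?an \<in> Mor G" "sr G ?an = rg G b" "dg G ?an = dg G a + dg G n"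
    using assms cmp_in_Mor sr_cmp dg_cmp by auto
  then have dl: "dg G (cmp G ?an b) - (dg G a + dg G n) = dg G b"
    using assms dg_cmp by simp
  then show "\<exists>a' b'. a' \<in> Mor G \<and> n \<in> Mor G \<and> b' \<in> Mor G \<and> sr G a' = rg G n \<and> sr G n = rg G b' \<and>
      dg G a' = dg G a \<and> dg G n = dg G a + dg G n - dg G a \<and>
      dg G b' = dg G (cmp G ?an b) - (dg G a + dg G n) \<and> cmp G (cmp G a' n) b' = cmp G ?an b"
    using assms by auto
  fix n'
  assume "\<exists>a' b'. a' \<in> Mor G \<and> n' \<in> Mor G \<and> b' \<in> Mor G \<and> sr G a' = rg G n' \<and> sr G n' = rg G b' \<and>
      dg G a' = dg G a \<and> dg G n' = dg G a + dg G n - dg G a \<and>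
      dg G b' = dg G (cmp G ?an b) - (dg G a + dg G n) \<and> cmp G (cmp G a' n') b' = cmp G ?an b"
  then obtain a' b' where h: "a' \<in> Mor G" "n' \<in> Mor G" "b' \<in> Mor G" "sr G a' = rg G n'"
    "sr G n' = rg G b'" "dg G a' = dg G a" "dg G n' = dg G n" "cmp G (cmp G a' n') b' = cmp G ?an b"
    by auto
  have "cmp G a' n' = ?an"
    using factorization_unique[OF an(1) assms(3) an(2)] h cmp_in_Mor sr_cmp dg_cmp an(3) by simp
  then show "n' = n"
    using factorization_unique[OF assms(1,2,4)] h by simp
qed

lemma seg_whole: "l \<in> Mor G \<Longrightarrow> seg G l 0 (dg G l) = l"
  using seg_middle[of "rg G l" l "sr G l"] rg_in_verts sr_in_verts
  by (simp add: verts_def rg_vert sr_vert cmp_rg cmp_sr)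

end

lemma graph_morphismD:
  assumes "graph_morphism k G x" "p \<in> degs k" "q \<in> degs k" "p \<le> q" "ed q \<le> fst x"
  shows "snd x (p, q) \<in> Mor G" "dg G (snd x (p, q)) = q - p"
    "rg G (snd x (p, q)) = snd x (p, p)" "sr G (snd x (p, q)) = snd x (q, q)"
  using assms unfolding graph_morphism_def by blast+

lemma graph_morphism_cmp:
  assumes "graph_morphism k G x" "p \<in> degs k" "q \<in> degs k" "t \<in> degs k" "p \<le> q" "q \<le> t"
    "ed t \<le> fst x"
  shows "cmp G (snd x (p, q)) (snd x (q, t)) = snd x (p, t)"
  using assms unfolding graph_morphism_def by blast

lemma fst_concat_shift:
  "fst (concat G l (shift P z)) = (\<lambda>i. enat (dg G l i) + (fst z i - enat (P i)))"
  by (simp add: concat_def shift_def)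

lemma snd_concat_shift:
  assumes "P \<le> Q" "dg G l \<le> L" "L - dg G l = Q - P"
  shows "snd (concat G l (shift P z)) (a, L) = seg G (cmp G l (snd z (P, Q))) a L"
proof -
  have "sup L (dg G l) = L" using assms(2) by (simp add: sup.absorb1)
  moreover have "Q - P + P = Q" using assms(1) by (simp add: le_fun_def fun_eq_iff)
  ultimately show ?thesis using assms(3) by (simp add: concat_def shift_def)
qed

context kgraph
begin

lemma boundary_path_saturated:
  assumes "boundary_path k G x"
  obtains nx where "nx \<in> degs k" "ed nx \<le> fst x"
    "\<And>t \<beta> i. t \<in> degs k \<Longrightarrow> nx \<le> t \<Longrightarrow> ed t \<le> fst x \<Longrightarrow> \<beta> \<in> Mor G \<Longrightarrow>
      rg G \<beta> = snd x (t, t) \<Longrightarrow> enat (t i) = fst x i \<Longrightarrow> dg G \<beta> i = 0"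
proof -
  obtain nx where nx: "nx \<in> degs k" "ed nx \<le> fst x"
    and no_edge: "\<And>t i. t \<in> degs k \<Longrightarrow> nx \<le> t \<Longrightarrow> ed t \<le> fst x \<Longrightarrow> i < k \<Longrightarrow>
      enat (t i) = fst x i \<Longrightarrow> \<not> (\<exists>e \<in> Mor G. rg G e = snd x (t, t) \<and> dg G e = ebasis i)"
    using assms unfolding boundary_path_def by blast
  have "dg G \<beta> i = 0"
    if t: "t \<in> degs k" "nx \<le> t" "ed t \<le> fst x" and \<beta>: "\<beta> \<in> Mor G" "rg G \<beta> = snd x (t, t)"
      and sat: "enat (t i) = fst x i" for t \<beta> i
  proof (rule ccontr)
    assume nz: "dg G \<beta> i \<noteq> 0"
    then have "i < k"
      using dg_in_degs[OF \<beta>(1), unfolded degs_def mem_Collect_eq] by (meson not_le)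
    moreover have "dg G \<beta> = ebasis i + (dg G \<beta> - ebasis i)"
      using nz by (auto simp: ebasis_def fun_eq_iff)
    ultimately obtain e r where "e \<in> Mor G" "r \<in> Mor G" "sr G e = rg G r" "dg G e = ebasis i"
        "cmp G e r = \<beta>"
      using factorization[OF \<beta>(1) ebasis_in_degs degs_diff[OF dg_in_degs[OF \<beta>(1)]]] by blast
    moreover from this have "rg G e = snd x (t, t)"
      using \<beta>(2) rg_cmp by metis
    ultimately show False
      using no_edge[OF t \<open>i < k\<close> sat] by blast
  qed
  with nx that show thesis by blast
qed

lemma graph_morphism_prefix:
  assumes x: "graph_morphism k G x" and mt: "m \<in> degs k" "t \<in> degs k" "m \<le> t" "ed t \<le> fst x"
    and l\<alpha>: "l \<in> Mor G" "\<alpha> \<in> Mor G" "sr G l = rg G \<alpha>" "cmp G l \<alpha> = snd x (m, t)"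
  shows "ed (m + dg G l) \<le> fst x" "snd x (m, m + dg G l) = l"
proof -
  have "dg G l + dg G \<alpha> = t - m"
    using dg_cmp[OF l\<alpha>(1-3)] graph_morphismD(2)[OF x mt] l\<alpha>(4) by simp
  then have lt: "m + dg G l \<le> t"
    using mt(3) by (auto simp: le_fun_def fun_eq_iff) (metis add_le_cancel_left le_add1 le_add_diff_inverse)
  then show ed: "ed (m + dg G l) \<le> fst x"
    using ed_mono mt(4) by blast
  have ml: "m \<le> m + dg G l" "m + dg G l \<in> degs k"
    using degs_add dg_in_degs l\<alpha>(1) mt(1) by (simp_all add: le_fun_def)
  note seg1 = graph_morphismD[OF x mt(1) ml(2) ml(1) ed]
  note seg2 = graph_morphismD[OF x ml(2) mt(2) lt mt(4)]
  have "cmp G (snd x (m, m + dg G l)) (snd x (m + dg G l, t)) = cmp G l \<alpha>"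
    using graph_morphism_cmp[OF x mt(1) ml(2) mt(2) ml(1) lt mt(4)] l\<alpha>(4) by simp
  then show "snd x (m, m + dg G l) = l"
    using factorization_unique[OF l\<alpha>(1-3)] seg1 seg2 by simp
qed

lemma minext_segment_prefix:
  assumes x: "graph_morphism k G x" and mt: "m \<in> degs k" "t \<in> degs k" "m \<le> t" "ed t \<le> fst x"
    and l: "l \<in> Mor G" and ext: "(\<alpha>, \<beta>) \<in> minext G l (snd x (m, t))"
    and short: "\<And>i. t i < m i + dg G l i \<Longrightarrow> dg G \<beta> i = 0"
  shows "ed (m + dg G l) \<le> fst x" "snd x (m, m + dg G l) = l"
proof -
  define \<mu> where "\<mu> = snd x (m, t)"
  note \<mu> = graph_morphismD[OF x mt, folded \<mu>_def]
  have common: "\<alpha> \<in> Mor G" "\<beta> \<in> Mor G" "sr G l = rg G \<alpha>" "sr G \<mu> = rg G \<beta>"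
    "cmp G l \<alpha> = cmp G \<mu> \<beta>" "dg G (cmp G l \<alpha>) = sup (dg G l) (dg G \<mu>)"
    using ext unfolding minext_def \<mu>_def mem_Collect_eq prod.case by blast+
  have sum: "(t - m) + dg G \<beta> = sup (dg G l) (t - m)"
    using common(5,6) dg_cmp[OF \<mu>(1) common(2,4)] \<mu>(2) by simp
  have "dg G \<beta> i = 0" for i
  proof -
    have "(t - m) i + dg G \<beta> i = max (dg G l i) ((t - m) i)"
      using sum by (metis plus_fun_apply sup_fun_def sup_nat_def)
    then show ?thesis
      using short[of i] by (simp add: max_def split: if_splits; linarith)
  qed
  then have "\<beta> = sr G \<mu>"
    using common(2,4) rg_vert[of \<beta>] by (simp add: verts_def fun_eq_iff)
  then have "cmp G l \<alpha> = \<mu>"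
    using common(5) cmp_sr \<mu>(1) by simp
  then show "ed (m + dg G l) \<le> fst x" "snd x (m, m + dg G l) = l"
    using graph_morphism_prefix[OF x mt l common(1,3)] \<mu>_def by simp_all
qed

lemma boundary_path_prefix_in_exhaustive:
  assumes x: "boundary_path k G x" and m: "m \<in> degs k" "ed m \<le> fst x" "snd x (m, m) = v"
    and E: "E \<subseteq> {l \<in> Mor G. rg G l = v}" "finite E" "exhaustive G v E"
  shows "\<exists>l \<in> E. ed (m + dg G l) \<le> fst x \<and> snd x (m, m + dg G l) = l"
proof -
  have gm: "graph_morphism k G x"
    using x by (simp add: boundary_path_def)
  obtain nx where nx: "nx \<in> degs k" "ed nx \<le> fst x"
    and saturated: "\<And>t \<beta> i. t \<in> degs k \<Longrightarrow> nx \<le> t \<Longrightarrow> ed t \<le> fst x \<Longrightarrow> \<beta> \<in> Mor G \<Longrightarrow>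
      rg G \<beta> = snd x (t, t) \<Longrightarrow> enat (t i) = fst x i \<Longrightarrow> dg G \<beta> i = 0"
    using boundary_path_saturated[OF x] by blast
  obtain M where M: "M \<in> degs k" "\<And>l. l \<in> E \<Longrightarrow> dg G l \<le> M"
    using finite_degs_bounded[of "dg G ` E" k] E(1,2) dg_in_degs by blast
  define s where "s = sup (m + M) nx"
  define t where "t = dmin s (fst x)"
  have "m \<le> s" "nx \<le> s" "s \<in> degs k"
    unfolding s_def using degs_sup degs_add m(1) M(1) nx(1)
    by (simp_all add: le_fun_def le_supI1)
  then have t: "t \<in> degs k" "ed t \<le> fst x" "nx \<le> t" "m \<le> t"
    unfolding t_def using degs_dmin ed_dmin le_dmin m(2) nx(2) by blast+
  note \<mu> = graph_morphismD[OF gm m(1) t(1) t(4) t(2)]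
  obtain l \<alpha> \<beta> where l: "l \<in> E" and ext: "(\<alpha>, \<beta>) \<in> minext G l (snd x (m, t))"
    using E(3) \<mu>(1,3) m(3) unfolding exhaustive_def by fast
  have "dg G \<beta> i = 0" if "t i < m i + dg G l i" for i
  proof -
    have "dg G l i \<le> M i"
      using M(2)[OF l] by (simp add: le_fun_def)
    with that have "t i < s i"
      unfolding s_def by (simp add: sup_fun_def sup_nat_def)
    then have "enat (t i) = fst x i"
      unfolding t_def by (rule dmin_less_imp_eq)
    moreover have "\<beta> \<in> Mor G" "rg G \<beta> = snd x (t, t)"
      using ext \<mu>(4) by (auto simp: minext_def)
    ultimately show ?thesis
      using saturated[OF t(1,3,2)] by blast
  qed
  then show ?thesis
    using minext_segment_prefix[OF gm m(1) t(1,4,2) _ ext] l E(1) by blast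
qed

end

(* Classes in Ptilde are the fibres of pkey, so a composite in ext, which is computed from
  the arbitrary representatives chosen by rep, is identified by computing its key. *)
definition pkey :: "'a prep \<Rightarrow> 'a \<times> (nat \<Rightarrow> nat) \<times> (nat \<Rightarrow> nat)" where
  "pkey a = (case a of (x, (m, n)) \<Rightarrow>
     (snd x (dmin m (fst x), dmin n (fst x)), m - dmin m (fst x), n - m))"

lemma pkey_Pair [simp]:
  "pkey (x, (m, n)) = (snd x (dmin m (fst x), dmin n (fst x)), m - dmin m (fst x), n - m)"
  by (simp add: pkey_def)

lemma peq_iff_pkey: "peq a b \<longleftrightarrow> pkey a = pkey b"
  by (simp add: peq_def pkey_def split: prod.splits)

lemma pcls_eqI: "pkey a = pkey b \<Longrightarrow> pcls k G a = pcls k G b"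
  by (simp add: pcls_def peq_iff_pkey)

lemma pcls_in_Ptilde: "a \<in> Preps k G \<Longrightarrow> pcls k G a \<in> Ptilde k G"
  by (simp add: Ptilde_def)

lemma rep_pcls:
  assumes "a \<in> Preps k G"
  shows "rep (pcls k G a) \<in> Preps k G" "pkey (rep (pcls k G a)) = pkey a"
proof -
  have "a \<in> pcls k G a"
    using assms by (simp add: pcls_def peq_iff_pkey)
  then have "rep (pcls k G a) \<in> pcls k G a"
    unfolding rep_def by (rule someI)
  then show "rep (pcls k G a) \<in> Preps k G" "pkey (rep (pcls k G a)) = pkey a"
    by (simp_all add: pcls_def peq_iff_pkey)
qed

lemma Ptilde_pcls_rep:
  assumes "C \<in> Ptilde k G"
  shows "rep C \<in> Preps k G" "C = pcls k G (rep C)"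
proof -
  obtain a where a: "a \<in> Preps k G" "C = pcls k G a"
    using assms by (auto simp: Ptilde_def)
  then show "rep C \<in> Preps k G" "C = pcls k G (rep C)"
    using rep_pcls[OF a(1)] pcls_eqI[of "rep C" a k G] by simp_all
qed

lemma Preps_iff:
  "(x, (m, n)) \<in> Preps k G \<longleftrightarrow>
     boundary_path k G x \<and> m \<in> degs k \<and> n \<in> degs k \<and> m \<le> n \<and> \<not> ed n \<le> fst x"
  by (simp add: Preps_def)

lemma Preps_graph_morphism: "(x, (m, n)) \<in> Preps k G \<Longrightarrow> graph_morphism k G x"
  by (simp add: Preps_def boundary_path_def)

lemma pkey_eq_ends:
  assumes x: "(x, (m, n)) \<in> Preps k G" and y: "(y, (p, q)) \<in> Preps k G"
    and eq: "pkey (y, (p, q)) = pkey (x, (m, n))"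
  shows "pkey (y, (p, p)) = pkey (x, (m, m))" "pkey (y, (q, q)) = pkey (x, (n, n))"
proof -
  define P Q M N where "P = dmin p (fst y)" "Q = dmin q (fst y)"
    "M = dmin m (fst x)" "N = dmin n (fst x)"
  have seg: "snd y (P, Q) = snd x (M, N)" and diff: "p - P = m - M" "q - p = n - m"
    using eq by (simp_all add: P_Q_M_N_def)
  have xdeg: "M \<in> degs k" "N \<in> degs k" "M \<le> N" "ed N \<le> fst x" "M \<le> m" "N \<le> n" "m \<le> n"
    using x by (auto simp: P_Q_M_N_def Preps_iff degs_dmin dmin_mono ed_dmin dmin_le)
  have ydeg: "P \<in> degs k" "Q \<in> degs k" "P \<le> Q" "ed Q \<le> fst y" "P \<le> p" "Q \<le> q" "p \<le> q"
    using y by (auto simp: P_Q_M_N_def Preps_iff degs_dmin dmin_mono ed_dmin dmin_le)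
  note xseg = graph_morphismD[OF Preps_graph_morphism[OF x] xdeg(1-4)]
  note yseg = graph_morphismD[OF Preps_graph_morphism[OF y] ydeg(1-4)]
  show "pkey (y, (p, p)) = pkey (x, (m, m))"
    using seg xseg(3) yseg(3) diff(1) by (simp add: P_Q_M_N_def)
  have "Q - P = N - M"
    using seg xseg(2) yseg(2) by simp
  then have "q - Q = n - N"
  proof -
    have "q i - Q i = n i - N i" if "Q i - P i = N i - M i" for i
      using that diff[THEN fun_cong, of i] xdeg(3,5-7)[THEN le_funD, of i]
        ydeg(3,5-7)[THEN le_funD, of i]
      by simp
    then show ?thesis
      using \<open>Q - P = N - M\<close> by (simp add: fun_eq_iff)
  qed
  then show "pkey (y, (q, q)) = pkey (x, (n, n))"
    using seg xseg(4) yseg(4) by (simp add: P_Q_M_N_def)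
qed

lemma pkey_eq_grounded:
  assumes x: "(x, (a, b)) \<in> Preps k G" and z: "(z, (c, d)) \<in> Preps k G"
    and eq: "pkey (z, (c, d)) = pkey (x, (a, b))" and a: "ed a \<le> fst x"
  shows "ed c \<le> fst z" "snd z (c, dmin d (fst z)) = snd x (a, dmin b (fst x))"
    "dmin d (fst z) - c = dmin b (fst x) - a" "d - c = b - a"
proof -
  show c: "ed c \<le> fst z"
    using eq dmin_eq[OF a] by (simp add: diff_dmin_eq_0_iff[symmetric])
  show seg: "snd z (c, dmin d (fst z)) = snd x (a, dmin b (fst x))" "d - c = b - a"
    using eq dmin_eq[OF a] dmin_eq[OF c] by simp_all
  have "c \<in> degs k" "dmin d (fst z) \<in> degs k" "c \<le> dmin d (fst z)" "ed (dmin d (fst z)) \<le> fst z"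
    using z le_dmin[OF _ c, of d] by (auto simp: Preps_iff degs_dmin ed_dmin)
  moreover have "a \<in> degs k" "dmin b (fst x) \<in> degs k" "a \<le> dmin b (fst x)"
      "ed (dmin b (fst x)) \<le> fst x"
    using x le_dmin[OF _ a, of b] by (auto simp: Preps_iff degs_dmin ed_dmin)
  ultimately show "dmin d (fst z) - c = dmin b (fst x) - a"
    using graph_morphismD(2)[OF Preps_graph_morphism[OF z]] seg(1)
      graph_morphismD(2)[OF Preps_graph_morphism[OF x]] by metis
qed

lemma pkey_concat_shift:
  assumes "ed P \<le> fst z" "P \<le> q" "a \<le> dg G l"
  shows "pkey (concat G l (shift P z), (a, dg G l + (q - P))) =
    (seg G (cmp G l (snd z (P, dmin q (fst z)))) a (dg G l + (dmin q (fst z) - P)), 0,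
     dg G l + (q - P) - a)"
proof -
  define X where "X = concat G l (shift P z)"
  have fX: "fst X = (\<lambda>i. enat (dg G l i) + (fst z i - enat (P i)))"
    unfolding X_def by (rule fst_concat_shift)
  have "ed (dg G l) \<le> fst X"
    unfolding fX by (simp add: ed_def le_fun_def)
  then have "dmin a (fst X) = a"
    using assms(3) ed_mono dmin_eq by blast
  moreover have "dmin (dg G l + (q - P)) (fst X) = dg G l + (dmin q (fst z) - P)"
    unfolding fX using assms(1,2) by (rule dmin_add_shifted)
  moreover have "snd X (a, dg G l + (dmin q (fst z) - P)) =
      seg G (cmp G l (snd z (P, dmin q (fst z)))) a (dg G l + (dmin q (fst z) - P))"
    unfolding X_def
  proof (rule snd_concat_shift)
    show "P \<le> dmin q (fst z)"
      using assms(2,1) by (rule le_dmin)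
  qed (simp_all add: le_fun_def)
  ultimately show ?thesis
    by (simp add: X_def)
qed

lemma ext_Mor: "Mor (ext k G) = Inl ` Mor G \<union> Inr ` Ptilde k G"
  by (simp add: ext_def)

lemma ext_Inl [simp]:
  "rg (ext k G) (Inl l) = Inl (rg G l)" "sr (ext k G) (Inl l) = Inl (sr G l)"
  "dg (ext k G) (Inl l) = dg G l" "cmp (ext k G) (Inl l) (Inl l') = Inl (cmp G l l')"
  by (simp_all add: ext_def)

lemma ext_Inr:
  assumes "rep C = (x, (m, n))"
  shows "rg (ext k G) (Inr C) =
      (if ed m \<le> fst x then Inl (snd x (m, m)) else Inr (pcls k G (x, (m, m))))"
    "sr (ext k G) (Inr C) = Inr (pcls k G (x, (n, n)))"
    "dg (ext k G) (Inr C) = n - m"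
  using assms by (simp_all add: ext_def)

lemma ext_cmp_Inl_Inr:
  "rep D = (x, (m, n)) \<Longrightarrow>
    cmp (ext k G) (Inl l) (Inr D) = Inr (pcls k G (concat G l (shift m x), (0, dg G l + n - m)))"
  by (simp add: ext_def)

lemma ext_cmp_Inr_Inr:
  "rep C = (x, (m, n)) \<Longrightarrow> rep D = (y, (p, q)) \<Longrightarrow>
    cmp (ext k G) (Inr C) (Inr D) =
      Inr (pcls k G (concat G (snd x (0, dmin n (fst x))) (shift (dmin p (fst y)) y), (m, n + q - p)))"
  by (simp add: ext_def)

lemma ext_dg_pcls:
  assumes "(x, (m, n)) \<in> Preps k G"
  shows "dg (ext k G) (Inr (pcls k G (x, (m, n)))) = n - m"
proof -
  obtain y p q where r: "rep (pcls k G (x, (m, n))) = (y, (p, q))"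
    using prod_cases3 by blast
  then show ?thesis
    using rep_pcls(2)[OF assms] ext_Inr(3)[OF r] by simp
qed

lemma ext_rg_pcls:
  assumes x: "(x, (m, n)) \<in> Preps k G"
  shows "rg (ext k G) (Inr (pcls k G (x, (m, n)))) =
    (if ed m \<le> fst x then Inl (snd x (m, m)) else Inr (pcls k G (x, (m, m))))"
proof -
  obtain y p q where r: "rep (pcls k G (x, (m, n))) = (y, (p, q))"
    using prod_cases3 by blast
  have ends: "pkey (y, (p, p)) = pkey (x, (m, m))"
    using pkey_eq_ends(1)[OF x] rep_pcls[OF x] r by simp
  then have "ed p \<le> fst y \<longleftrightarrow> ed m \<le> fst x"
    by (simp add: diff_dmin_eq_0_iff[symmetric])
  moreover have "snd y (p, p) = snd x (m, m)" if "ed p \<le> fst y" "ed m \<le> fst x"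
    using ends that by (simp add: dmin_eq)
  ultimately show ?thesis
    using ext_Inr(1)[OF r] pcls_eqI[OF ends] by simp
qed

lemma ext_sr_pcls:
  assumes x: "(x, (m, n)) \<in> Preps k G"
  shows "sr (ext k G) (Inr (pcls k G (x, (m, n)))) = Inr (pcls k G (x, (n, n)))"
proof -
  obtain y p q where r: "rep (pcls k G (x, (m, n))) = (y, (p, q))"
    using prod_cases3 by blast
  then have "pkey (y, (q, q)) = pkey (x, (n, n))"
    using pkey_eq_ends(2)[OF x] rep_pcls[OF x] by simp
  then have "pcls k G (y, (q, q)) = pcls k G (x, (n, n))"
    by (rule pcls_eqI)
  then show ?thesis
    using ext_Inr(2)[OF r] by simp
qed

context kgraph
begin

lemma seg_cmp_after_prefix:
  assumes "a \<in> Mor G" "b \<in> Mor G" "c \<in> Mor G" "sr G a = rg G b" "sr G b = rg G c"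
  shows "seg G (cmp G (cmp G a b) c) (dg G a) (dg G a + dg G b + dg G c) = cmp G b c"
proof -
  have bc: "cmp G b c \<in> Mor G" "rg G (cmp G b c) = rg G b" "dg G (cmp G b c) = dg G b + dg G c"
    using assms(2,3,5) by (simp_all add: cmp_in_Mor rg_cmp dg_cmp)
  have "sr G a = rg G (cmp G b c)"
    using assms(4) bc(2) by simp
  then have "cmp G (cmp G a b) c = cmp G (cmp G a (cmp G b c)) (sr G (cmp G b c))"
    using assms bc(1) cmp_assoc cmp_sr[OF cmp_in_Mor] sr_cmp by metis
  then show ?thesis
    using seg_middle[of a "cmp G b c" "sr G (cmp G b c)"] sr_in_verts[OF bc(1)] assms(1,4) bc
    by (simp add: verts_def rg_vert add.assoc)
qed

lemma pkey_cmp_Inl_rep: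
  assumes x: "(x, (m, q)) \<in> Preps k G" and l: "l \<in> Mor G" "m + dg G l \<le> q"
    and prefix: "ed (m + dg G l) \<le> fst x" "snd x (m, m + dg G l) = l"
    and z: "(z, (m', n')) \<in> Preps k G" "pkey (z, (m', n')) = pkey (x, (m + dg G l, q))"
  shows "pkey (concat G l (shift m' z), (0, dg G l + n' - m')) = pkey (x, (m, q))"
proof -
  let ?ml = "m + dg G l" and ?Q = "dmin q (fst x)" and ?R = "dmin n' (fst z)"
  have gm: "graph_morphism k G x"
    using x by (rule Preps_graph_morphism)
  have xl: "(x, (?ml, q)) \<in> Preps k G"
    using x l degs_add dg_in_degs by (simp add: Preps_iff)
  note zx = pkey_eq_grounded[OF xl z(1,2) prefix(1)]
  have degs: "m \<in> degs k" "?ml \<in> degs k" "?Q \<in> degs k" "m \<le> ?ml"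
    using x xl by (auto simp: Preps_iff degs_dmin le_fun_def)
  have "?ml \<le> ?Q" "ed ?Q \<le> fst x"
    using le_dmin[OF l(2) prefix(1)] ed_dmin by blast+
  note degs = degs this
  have "m' \<le> n'"
    using z(1) by (simp add: Preps_iff)
  then have "dg G l + n' - m' = dg G l + (n' - m')"
    by (simp add: le_fun_def fun_eq_iff)
  moreover have "dg G l + (q - ?ml) = q - m"
    using le_funD[OF l(2)] by (simp add: fun_eq_iff)
  moreover have "dg G l + (?R - m') = ?Q - m"
    using zx(3) le_funD[OF degs(5)] by (simp add: fun_eq_iff)
  moreover have "cmp G l (snd z (m', ?R)) = snd x (m, ?Q)"
    using zx(2) prefix(2) graph_morphism_cmp[OF gm degs(1-6)] by simp
  moreover have "dmin m (fst x) = m"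
    using ed_mono[OF degs(4) prefix(1)] by (rule dmin_eq)
  moreover have "m \<le> ?Q"
    using degs(4,5) by (rule order_trans)
  ultimately show ?thesis
    using pkey_concat_shift[OF zx(1) \<open>m' \<le> n'\<close>, of 0 G l] zx(4)
      seg_whole[OF graph_morphismD(1)[OF gm degs(1,3) _ degs(6)]]
      graph_morphismD(2)[OF gm degs(1,3) _ degs(6)]
    by simp
qed

lemma ext_cmp_Inl_pcls:
  assumes x: "(x, (m, q)) \<in> Preps k G" and l: "l \<in> Mor G" "m + dg G l \<le> q"
    and prefix: "ed (m + dg G l) \<le> fst x" "snd x (m, m + dg G l) = l"
  shows "cmp (ext k G) (Inl l) (Inr (pcls k G (x, (m + dg G l, q)))) = Inr (pcls k G (x, (m, q)))"
proof -
  have xl: "(x, (m + dg G l, q)) \<in> Preps k G"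
    using x l degs_add dg_in_degs by (simp add: Preps_iff)
  obtain z m' n' where r: "rep (pcls k G (x, (m + dg G l, q))) = (z, (m', n'))"
    using prod_cases3 by blast
  have "pkey (concat G l (shift m' z), (0, dg G l + n' - m')) = pkey (x, (m, q))"
    using pkey_cmp_Inl_rep[OF x l prefix rep_pcls[OF xl, unfolded r]] .
  then have "pcls k G (concat G l (shift m' z), (0, dg G l + n' - m')) = pcls k G (x, (m, q))"
    by (rule pcls_eqI)
  then show ?thesis
    using ext_cmp_Inl_Inr[OF r] by simp
qed

lemma seg_prefix_cmp:
  assumes x: "graph_morphism k G x" and mn: "m \<in> degs k" "n \<in> degs k" "m \<le> n" "ed n \<le> fst x"
    and c: "c \<in> Mor G" "rg G c = snd x (n, n)"
  shows "seg G (cmp G (snd x (0, n)) c) m (n + dg G c) = cmp G (snd x (m, n)) c"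
proof -
  have zero: "(0::nat \<Rightarrow> nat) \<in> degs k" "0 \<le> m"
    by (simp_all add: zero_in_degs le_fun_def)
  note a = graph_morphismD[OF x zero(1) mn(1) zero(2) ed_mono[OF mn(3,4)]]
  note b = graph_morphismD[OF x mn]
  have "snd x (0, n) = cmp G (snd x (0, m)) (snd x (m, n))"
    using graph_morphism_cmp[OF x zero(1) mn(1,2) zero(2) mn(3,4)] by simp
  moreover have "m + (n - m) + dg G c = n + dg G c"
    using mn(3) by (auto simp: fun_eq_iff le_fun_def)
  ultimately show ?thesis
    using seg_cmp_after_prefix[OF a(1) b(1) c(1)] a b c(2) by simp
qed

lemma pkey_cmp_reps:
  assumes C: "(x, (m, n)) \<in> Preps k G" "(x', (m', n')) \<in> Preps k G"
      "pkey (x', (m', n')) = pkey (x, (m, n))"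
    and D: "(x, (n, q)) \<in> Preps k G" "(y, (p, q')) \<in> Preps k G"
      "pkey (y, (p, q')) = pkey (x, (n, q))"
    and m: "ed m \<le> fst x"
  shows "pkey (concat G (snd x' (0, dmin n' (fst x'))) (shift (dmin p (fst y)) y), (m', n' + q' - p))
    = pkey (x, (m, q))"
proof -
  define N Q N' P Q' where "N = dmin n (fst x)" "Q = dmin q (fst x)" "N' = dmin n' (fst x')"
    "P = dmin p (fst y)" "Q' = dmin q' (fst y)"
  note defs = N_Q_N'_P_Q'_def
  note x'x = pkey_eq_grounded[OF C(1-3) m, folded defs]
  have gm: "graph_morphism k G x" "graph_morphism k G x'" "graph_morphism k G y"
    using C(1,2) D(2) by (simp_all add: Preps_graph_morphism)
  have x_degs: "m \<in> degs k" "N \<in> degs k" "Q \<in> degs k" "m \<le> N" "N \<le> Q" "ed Q \<le> fst x"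
    "m \<le> n" "n \<le> q"
    using C(1) D(1) le_dmin[OF _ m, of n] dmin_mono[of n q]
    by (auto simp: defs Preps_iff degs_dmin ed_dmin)
  have x'_degs: "m' \<in> degs k" "N' \<in> degs k" "m' \<le> N'" "ed N' \<le> fst x'" "m' \<le> n'" "N' \<le> n'"
    using C(2) le_dmin[OF _ x'x(1), of n'] by (auto simp: defs Preps_iff degs_dmin ed_dmin dmin_le)
  have y_degs: "P \<in> degs k" "Q' \<in> degs k" "P \<le> Q'" "ed Q' \<le> fst y" "ed P \<le> fst y" "P \<le> p"
    "p \<le> q'"
    using D(2) dmin_mono[of p q'] by (auto simp: defs Preps_iff degs_dmin ed_dmin dmin_le)
  have yx: "snd y (P, Q') = snd x (N, Q)" "p - P = n - N" "q' - p = q - n"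
    using D(3) by (simp_all add: defs)
  have ends: "n' - N' = n - N"
    using pkey_eq_ends(2)[OF C] by (simp add: defs)
  have "N' i + (q' i - P i) = n' i + q' i - p i" for i
    using ends[THEN fun_cong, of i] yx(2)[THEN fun_cong, of i] x'_degs(6)[THEN le_funD, of i]
      y_degs(6,7)[THEN le_funD, of i]
    by simp
  moreover have "N' i + (q' i - P i) - m' i = q i - m i" for i
    using ends[THEN fun_cong, of i] x'x(4)[THEN fun_cong, of i] yx(2,3)[THEN fun_cong, of i]
      x_degs(7,8)[THEN le_funD, of i] x'_degs(5,6)[THEN le_funD, of i]
      y_degs(6,7)[THEN le_funD, of i]
    by simp linarith
  ultimately have arith: "N' + (q' - P) = n' + q' - p" "N' + (q' - P) - m' = q - m"
    by (simp_all add: fun_eq_iff)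
  have c: "snd y (P, Q') \<in> Mor G" "dg G (snd y (P, Q')) = Q' - P"
    "rg G (snd y (P, Q')) = snd x' (N', N')"
    using graph_morphismD[OF gm(3) y_degs(1-4)] yx(1) x'x(2)
      graph_morphismD(3)[OF gm(1) x_degs(2,3,5,6)] graph_morphismD(4)[OF gm(2) x'_degs(1-4)]
      graph_morphismD(4)[OF gm(1) x_degs(1,2,4) ed_mono[OF x_degs(5,6)]]
    by simp_all
  have "seg G (cmp G (snd x' (0, N')) (snd y (P, Q'))) m' (N' + (Q' - P)) = snd x (m, Q)"
    using seg_prefix_cmp[OF gm(2) x'_degs(1-4) c(1,3)] c(2) x'x(2) yx(1)
      graph_morphism_cmp[OF gm(1) x_degs(1-6)] by simp
  moreover have "dg G (snd x' (0, N')) = N'"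
    using graph_morphismD(2)[OF gm(2) zero_in_degs x'_degs(2) _ x'_degs(4)] by (simp add: le_fun_def)
  ultimately have "pkey (concat G (snd x' (0, N')) (shift P y), (m', N' + (q' - P))) =
      (snd x (m, Q), 0, q - m)"
    using pkey_concat_shift[OF y_degs(5) order_trans[OF y_degs(6,7)], of m' G "snd x' (0, N')"]
      x'_degs(3) arith(2) by (simp add: defs(5))
  then show ?thesis
    using arith(1) dmin_eq[OF m] by (simp add: defs)
qed

(* Only the case needed below: the first factor starts at a vertex of Lambda. *)
lemma ext_cmp_pcls_pcls:
  assumes C: "(x, (m, n)) \<in> Preps k G" and D: "(x, (n, q)) \<in> Preps k G" and m: "ed m \<le> fst x"
  shows "cmp (ext k G) (Inr (pcls k G (x, (m, n)))) (Inr (pcls k G (x, (n, q)))) =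
    Inr (pcls k G (x, (m, q)))"
proof -
  obtain x' m' n' where r1: "rep (pcls k G (x, (m, n))) = (x', (m', n'))"
    using prod_cases3 by blast
  obtain y p q' where r2: "rep (pcls k G (x, (n, q))) = (y, (p, q'))"
    using prod_cases3 by blast
  have "pkey (concat G (snd x' (0, dmin n' (fst x'))) (shift (dmin p (fst y)) y), (m', n' + q' - p))
      = pkey (x, (m, q))"
    using pkey_cmp_reps[OF C _ _ D _ _ m] rep_pcls[OF C] rep_pcls[OF D] r1 r2 by simp
  then have "pcls k G (concat G (snd x' (0, dmin n' (fst x'))) (shift (dmin p (fst y)) y),
      (m', n' + q' - p)) = pcls k G (x, (m, q))"
    by (rule pcls_eqI)
  then show ?thesis
    using ext_cmp_Inr_Inr[OF r1 r2] by simp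
qed

lemma ext_exhaustive_at_Inr:
  assumes C: "C \<in> Ptilde k G" "rg (ext k G) (Inr C) = Inl v"
    and E: "E \<subseteq> {l \<in> Mor G. rg G l = v}" "finite E" "exhaustive G v E"
  shows "\<exists>l \<in> E. minext (ext k G) (Inl l) (Inr C) \<noteq> {}"
proof -
  obtain x m n where x: "(x, (m, n)) \<in> Preps k G" and C_eq: "C = pcls k G (x, (m, n))"
    using Ptilde_pcls_rep[OF C(1)] prod_cases3 by metis
  have m: "ed m \<le> fst x" "snd x (m, m) = v"
    using C(2) ext_rg_pcls[OF x] unfolding C_eq by (auto split: if_splits)
  have bp: "boundary_path k G x" "m \<in> degs k" "n \<in> degs k" "m \<le> n" "\<not> ed n \<le> fst x"
    using x by (simp_all add: Preps_iff)
  obtain l where l: "l \<in> E" "ed (m + dg G l) \<le> fst x" "snd x (m, m + dg G l) = l"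
    using boundary_path_prefix_in_exhaustive[OF bp(1,2) m E] by blast
  have l_Mor: "l \<in> Mor G"
    using l(1) E(1) by blast
  define N where "N = sup (dg G l) (n - m)"
  have ml: "m + dg G l \<in> degs k"
    using bp(2) dg_in_degs[OF l_Mor] by (rule degs_add)
  have N: "m + N \<in> degs k" "n \<le> m + N" "m + dg G l \<le> m + N"
    unfolding N_def using bp(2,3) dg_in_degs[OF l_Mor]
    by (auto simp: degs_add degs_sup degs_diff le_fun_def sup_nat_def)
  then have "\<not> ed (m + N) \<le> fst x"
    using bp(5) ed_mono by blast
  then have Preps: "(x, (m, m + N)) \<in> Preps k G" "(x, (n, m + N)) \<in> Preps k G"
    "(x, (m + dg G l, m + N)) \<in> Preps k G"
    using bp N ml by (auto simp: Preps_iff le_fun_def)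
  define D D' where "D = pcls k G (x, (n, m + N))" "D' = pcls k G (x, (m + dg G l, m + N))"
  have "cmp (ext k G) (Inr C) (Inr D) = Inr (pcls k G (x, (m, m + N)))"
    unfolding C_eq D_D'_def using ext_cmp_pcls_pcls[OF x Preps(2) m(1)] .
  moreover have "cmp (ext k G) (Inl l) (Inr D') = Inr (pcls k G (x, (m, m + N)))"
    unfolding D_D'_def using ext_cmp_Inl_pcls[OF Preps(1) l_Mor N(3) l(2,3)] .
  moreover have "dg (ext k G) (Inr (pcls k G (x, (m, m + N)))) = sup (dg G l) (dg (ext k G) (Inr C))"
    using ext_dg_pcls[OF Preps(1)] ext_dg_pcls[OF x] unfolding C_eq N_def by simp
  moreover have "sr (ext k G) (Inr C) = rg (ext k G) (Inr D)"
    unfolding C_eq D_D'_def using ext_sr_pcls[OF x] ext_rg_pcls[OF Preps(2)] bp(5) by simp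
  moreover have "sr (ext k G) (Inl l) = rg (ext k G) (Inr D')"
    using ext_rg_pcls[OF Preps(3)] l(2,3) D_D'_def
      graph_morphismD(4)[OF Preps_graph_morphism[OF x] bp(2) ml _ l(2)]
    by (simp add: le_fun_def)
  moreover have "Inr D \<in> Mor (ext k G)" "Inr D' \<in> Mor (ext k G)"
    unfolding D_D'_def using Preps(2,3) by (simp_all add: ext_Mor pcls_in_Ptilde)
  ultimately have "(Inr D', Inr D) \<in> minext (ext k G) (Inl l) (Inr C)"
    unfolding minext_def using l_Mor by (simp add: ext_Mor)
  then show ?thesis
    using l(1) by blast
qed

end

lemma ext_exhaustive_at_Inl:
  assumes "exhaustive G v E" "\<mu> \<in> Mor G" "rg G \<mu> = v"
  shows "\<exists>l \<in> E. minext (ext k G) (Inl l) (Inl \<mu>) \<noteq> {}"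
proof -
  obtain l a b where "l \<in> E" "(a, b) \<in> minext G l \<mu>"
    using assms unfolding exhaustive_def by fast
  then have "(Inl a, Inl b) \<in> minext (ext k G) (Inl l) (Inl \<mu>)"
    by (auto simp: minext_def ext_Mor)
  with \<open>l \<in> E\<close> show ?thesis
    by blast
qed

theorem lemma3p27:
  fixes k :: nat and G :: "'a cat_data" and v :: 'a and E :: "'a set"
  assumes "is_kgraph k G"
    and "finitely_aligned G"
    and "v \<in> verts G"
    and "E \<subseteq> {l \<in> Mor G. rg G l = v}"
    and "finite E"
    and "exhaustive G v E"
  shows "finite (Inl ` E) \<and> Inl ` E \<subseteq> {l \<in> Mor (ext k G). rg (ext k G) l = Inl v}
         \<and> exhaustive (ext k G) (Inl v) (Inl ` E)"
proof -
  interpret kgraph k G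
    using assms(1) by (rule kgraph.intro)
  have "\<exists>l \<in> E. minext (ext k G) (Inl l) \<mu> \<noteq> {}"
    if "\<mu> \<in> Mor (ext k G)" "rg (ext k G) \<mu> = Inl v" for \<mu>
  proof (cases \<mu>)
    case (Inl \<mu>')
    then have "\<mu>' \<in> Mor G" "rg G \<mu>' = v"
      using that by (auto simp: ext_Mor)
    then show ?thesis
      using ext_exhaustive_at_Inl[OF assms(6)] Inl by blast
  next
    case (Inr C)
    then have "C \<in> Ptilde k G"
      using that(1) by (auto simp: ext_Mor)
    then show ?thesis
      using ext_exhaustive_at_Inr assms(4-6) that(2) Inr by blast
  qed
  moreover have "Inl ` E \<subseteq> {l \<in> Mor (ext k G). rg (ext k G) l = Inl v}"
    using assms(4) by (auto simp: ext_Mor)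
  ultimately show ?thesis
    using assms(5) unfolding exhaustive_def by blast
qed

end
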